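(* Let $\mathcal{X}$ be a finite set, let $\underline{T}$ be a lower transition operator on $\mathcal{L}(\mathcal{X})$ and let $(\underline{T}_n)_{n\in\mathbb{N}}$ be a sequence of lower transition operators on $\mathcal{L}(\mathcal{X})$. Then $\|\underline{T}_n-\underline{T}\|\to0$ if and only if $\underline{T}_nf\to\underline{T}f$ for every $f\in\mathcal{L}(\mathcal{X})$.
   Context: $\mathcal{L}(\mathcal{X})$ is the set of real-valued functions on $\mathcal{X}$ with the maximum norm $\|f\|=\max_{x}|f(x)|$. For non-negatively homogeneous operators $A\colon\mathcal{L}(\mathcal{X})\to\mathcal{L}(\mathcal{X})$ (i.e. $A(\lambda f)=\lambda Af$ for $\lambda\ge0$), $\|A\|\coloneqq\sup\{\|Af\|\colon\|f\|=1\}$. A lower transition operator is a map $\underline{T}\colon\mathcal{L}(\mathcal{X})\to\mathcal{L}(\mathcal{X})$ such that for all $f,g$ and $\lambda\ge0$: $\underline{T}f\ge\min f$ (pointwise); $\underline{T}(f+g)\ge\underline{T}f+\underline{T}g$; $\underline{T}(\lambda f)=\lambda\underline{T}f$. *)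

theory Defs
  imports Complex_Main
begin

definition fnorm :: "('x::finite \<Rightarrow> real) \<Rightarrow> real" where
  "fnorm f = Max (range (\<lambda>x. \<bar>f x\<bar>))"

definition opnorm :: "(('x::finite \<Rightarrow> real) \<Rightarrow> ('x \<Rightarrow> real)) \<Rightarrow> real" where
  "opnorm A = Sup {fnorm (A f) | f. fnorm f = 1}"

definition lower_transition_operator :: "(('x::finite \<Rightarrow> real) \<Rightarrow> ('x \<Rightarrow> real)) \<Rightarrow> bool" where
  "lower_transition_operator T \<longleftrightarrow>
     (\<forall>f x. T f x \<ge> Min (range f)) \<and>
     (\<forall>f g x. T (\<lambda>y. f y + g y) x \<ge> T f x + T g x) \<and>
     (\<forall>f (c::real). c \<ge> 0 \<longrightarrow> T (\<lambda>y. c * f y) = (\<lambda>x. c * T f x))"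

end

theory Submission
  imports Defs "HOL-Library.FuncSet"
begin

text \<open>The difference of two lower transition operators is positively homogeneous and
  2-Lipschitz for the maximum norm, since each operator is nonexpansive (it is monotone and
  commutes with adding constants). For such operators, the operator norm bounds the action on
  every f, which gives one direction. Conversely, the unit sphere of the finite-dimensional
  space L(X) has a finite \<epsilon>-net; pointwise convergence on the net together with the uniform
  Lipschitz bound yields uniform convergence on the sphere, i.e. convergence in operator norm.\<close>

lemma fnorm_le_iff: "fnorm (f::'x::finite \<Rightarrow> real) \<le> e \<longleftrightarrow> (\<forall>x. \<bar>f x\<bar> \<le> e)"
  unfolding fnorm_def by (subst Max_le_iff) auto

lemma abs_le_fnorm: "\<bar>(f::'x::finite \<Rightarrow> real) x\<bar> \<le> fnorm f"
  unfolding fnorm_def by (rule Max_ge) auto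

lemma fnorm_nonneg: "0 \<le> fnorm (f::'x::finite \<Rightarrow> real)"
  using abs_le_fnorm[of f undefined] by linarith

lemma fnorm_zero [simp]: "fnorm (\<lambda>x::'x::finite. 0::real) = 0"
  unfolding fnorm_def by simp

lemma fnorm_eq_0_iff: "fnorm (f::'x::finite \<Rightarrow> real) = 0 \<longleftrightarrow> f = (\<lambda>x. 0)"
proof
  assume "fnorm f = 0"
  then show "f = (\<lambda>x. 0)"
    using abs_le_fnorm[of f] by (auto simp: fun_eq_iff)
qed simp

lemma fnorm_one: "fnorm (\<lambda>x::'x::finite. 1::real) = 1"
  unfolding fnorm_def by simp

lemma fnorm_minus_commute:
  "fnorm (\<lambda>x. (g::'x::finite \<Rightarrow> real) x - f x) = fnorm (\<lambda>x. f x - g x)"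
  unfolding fnorm_def by (simp add: abs_minus_commute)

lemma fnorm_scale:
  assumes "(c::real) \<ge> 0"
  shows "fnorm (\<lambda>x. c * (f::'x::finite \<Rightarrow> real) x) = c * fnorm f"
proof -
  have "range (\<lambda>x. \<bar>c * f x\<bar>) = (\<lambda>t. c * t) ` range (\<lambda>x. \<bar>f x\<bar>)"
    using assms by (auto simp: abs_mult)
  moreover have "mono (\<lambda>t. c * t)"
    using assms by (simp add: mono_def mult_left_mono)
  ultimately show ?thesis
    unfolding fnorm_def using mono_Max_commute[of "\<lambda>t. c * t" "range (\<lambda>x. \<bar>f x\<bar>)"] by simp
qed

text \<open>Rounding to the grid \<open>\<delta> \<int>\<close> moves a function in the closed unit ball to one of finitely
  many functions with values in \<open>\<delta> {-N..N}\<close>.\<close>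

lemma finite_net_unit_ball:
  assumes "(\<delta>::real) > 0"
  obtains G :: "('x::finite \<Rightarrow> real) set"
  where "finite G" "\<And>f. fnorm f \<le> 1 \<Longrightarrow> \<exists>g\<in>G. fnorm (\<lambda>x. f x - g x) \<le> \<delta>"
proof
  define N where "N = \<lceil>1 / \<delta>\<rceil> + 1"
  define S where "S = (\<lambda>k. \<delta> * of_int k) ` {-N..N}"
  define rd where "rd = (\<lambda>f::'x \<Rightarrow> real. \<lambda>x. \<delta> * of_int (round (f x / \<delta>)))"
  show "finite (Pi\<^sub>E (UNIV :: 'x set) (\<lambda>_. S))"
    by (intro finite_PiE) (auto simp: S_def)
  fix f :: "'x \<Rightarrow> real"
  assume f: "fnorm f \<le> 1"
  have round_close: "\<bar>of_int (round (f x / \<delta>)) - f x / \<delta>\<bar> \<le> 1/2" for x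
    by (rule of_int_round_abs_le)
  have "rd f x \<in> S" for x
  proof -
    have "\<bar>f x / \<delta>\<bar> \<le> 1 / \<delta>"
      using abs_le_fnorm[of f x] f assms by (simp add: divide_right_mono abs_divide)
    then have "\<bar>round (f x / \<delta>)\<bar> \<le> N"
      using round_close[of x] le_of_int_ceiling[of "1 / \<delta>"] unfolding N_def
      by (simp only: abs_le_iff) linarith
    then have "round (f x / \<delta>) \<in> {-N..N}"
      by (auto simp: abs_le_iff)
    then show ?thesis
      unfolding S_def rd_def by (rule image_eqI[OF refl])
  qed
  then have "rd f \<in> Pi\<^sub>E UNIV (\<lambda>_. S)"
    by (simp add: PiE_UNIV_domain)
  moreover have "fnorm (\<lambda>x. f x - rd f x) \<le> \<delta>"
    unfolding fnorm_le_iff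
  proof
    fix x
    have "\<bar>f x - rd f x\<bar> = \<delta> * \<bar>of_int (round (f x / \<delta>)) - f x / \<delta>\<bar>"
      using assms by (simp add: rd_def abs_mult abs_minus_commute field_simps)
    also have "\<dots> \<le> \<delta>"
      using round_close[of x] assms by (simp add: mult_left_le)
    finally show "\<bar>f x - rd f x\<bar> \<le> \<delta>" .
  qed
  ultimately show "\<exists>g\<in>Pi\<^sub>E UNIV (\<lambda>_. S). fnorm (\<lambda>x. f x - g x) \<le> \<delta>"
    by blast
qed

context
  fixes A :: "('x::finite \<Rightarrow> real) \<Rightarrow> ('x \<Rightarrow> real)" and L :: real
  assumes homogeneous: "\<And>c f. c \<ge> 0 \<Longrightarrow> A (\<lambda>y. c * f y) = (\<lambda>x. c * A f x)"
    and lipschitz: "\<And>f g. fnorm (\<lambda>x. A f x - A g x) \<le> L * fnorm (\<lambda>x. f x - g x)"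
begin

lemma homogeneous_zero: "A (\<lambda>y. 0) = (\<lambda>x. 0)"
  using homogeneous[of 0 "\<lambda>y. 0"] by simp

lemma fnorm_le_lipschitz: "fnorm (A f) \<le> L * fnorm f"
  using lipschitz[of f "\<lambda>y. 0"] by (simp add: homogeneous_zero)

lemma bdd_above_opnorm_set: "bdd_above {fnorm (A f) | f. fnorm f = 1}"
proof (rule bdd_aboveI)
  fix v
  assume "v \<in> {fnorm (A f) | f. fnorm f = 1}"
  then obtain f where "fnorm f = 1" "v = fnorm (A f)"
    by blast
  then show "v \<le> L"
    using fnorm_le_lipschitz[of f] by simp
qed

lemma fnorm_le_opnorm: "fnorm (A f) \<le> opnorm A * fnorm f"
proof (cases "fnorm f = 0")
  case True
  then show ?thesis
    by (simp add: fnorm_eq_0_iff homogeneous_zero)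
next
  case False
  define a where "a = fnorm f"
  have a: "a > 0"
    using False fnorm_nonneg[of f] unfolding a_def by linarith
  define h where "h = (\<lambda>y. f y / a)"
  have f_eq: "f = (\<lambda>y. a * h y)"
    using a by (auto simp: h_def fun_eq_iff)
  have "fnorm f = a * fnorm h"
    by (subst f_eq) (use a in \<open>simp add: fnorm_scale\<close>)
  then have "fnorm h = 1"
    using a unfolding a_def by simp
  then have h_le: "fnorm (A h) \<le> opnorm A"
    unfolding opnorm_def by (intro cSup_upper bdd_above_opnorm_set) blast
  have "fnorm (A f) = a * fnorm (A h)"
    by (subst f_eq) (use a in \<open>simp add: homogeneous fnorm_scale\<close>)
  also have "\<dots> \<le> a * opnorm A"
    using h_le a by simp
  finally show ?thesis
    by (simp add: a_def mult.commute)
qed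

lemma opnorm_nonneg: "0 \<le> opnorm A"
  using fnorm_le_opnorm[of "\<lambda>x. 1"] fnorm_nonneg[of "A (\<lambda>x. 1)"] by (simp add: fnorm_one)

end

lemma opnorm_le:
  assumes "\<And>f. fnorm f = 1 \<Longrightarrow> fnorm (A f) \<le> c"
  shows "opnorm (A :: ('x::finite \<Rightarrow> real) \<Rightarrow> ('x \<Rightarrow> real)) \<le> c"
  unfolding opnorm_def using assms fnorm_one by (blast intro: cSup_least)

lemma equi_lipschitz_uniform_convergence:
  fixes D :: "nat \<Rightarrow> ('x::finite \<Rightarrow> real) \<Rightarrow> ('x \<Rightarrow> real)"
  assumes lipschitz: "\<And>n f g. fnorm (\<lambda>x. D n f x - D n g x) \<le> L * fnorm (\<lambda>x. f x - g x)"
    and L: "L \<ge> 0"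
    and pointwise: "\<And>g. (\<lambda>n. fnorm (D n g)) \<longlonglongrightarrow> 0"
    and e: "e > 0"
  shows "eventually (\<lambda>n. \<forall>f. fnorm f = 1 \<longrightarrow> fnorm (D n f) \<le> e) sequentially"
proof -
  define \<delta> where "\<delta> = e / (2 * (L + 1))"
  have \<delta>: "\<delta> > 0" "L * \<delta> \<le> e / 2"
    using e L by (auto simp: \<delta>_def field_simps)
  obtain G :: "('x \<Rightarrow> real) set" where G: "finite G"
    and net: "\<And>f. fnorm f \<le> 1 \<Longrightarrow> \<exists>g\<in>G. fnorm (\<lambda>x. f x - g x) \<le> \<delta>"
    using finite_net_unit_ball[OF \<delta>(1)] by blast
  have "eventually (\<lambda>n. \<forall>g\<in>G. fnorm (D n g) < e / 2) sequentially"
    using e by (intro eventually_ball_finite G ballI order_tendstoD(2)[OF pointwise]) simp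
  then show ?thesis
  proof eventually_elim
    case (elim n)
    show ?case
    proof (intro allI impI)
      fix f :: "'x \<Rightarrow> real"
      assume "fnorm f = 1"
      then obtain g where "g \<in> G" and fg: "fnorm (\<lambda>x. f x - g x) \<le> \<delta>"
        using net by force
      have close: "fnorm (\<lambda>x. D n f x - D n g x) \<le> e / 2"
        using lipschitz[of n f g] mult_left_mono[OF fg L] \<delta>(2) by linarith
      have small: "fnorm (D n g) < e / 2"
        using elim \<open>g \<in> G\<close> by blast
      show "fnorm (D n f) \<le> e"
        unfolding fnorm_le_iff
      proof
        fix x
        show "\<bar>D n f x\<bar> \<le> e"
          using abs_le_fnorm[of "D n g" x] abs_le_fnorm[of "\<lambda>x. D n f x - D n g x" x] close small
          by linarith
      qed
    qed
  qed
qed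

context
  fixes T :: "('x::finite \<Rightarrow> real) \<Rightarrow> ('x \<Rightarrow> real)"
  assumes lto: "lower_transition_operator T"
begin

lemma lto_ge_Min: "T f x \<ge> Min (range f)"
  using lto unfolding lower_transition_operator_def by blast

lemma lto_superadditive: "T (\<lambda>y. f y + g y) x \<ge> T f x + T g x"
  using lto unfolding lower_transition_operator_def by blast

lemma lto_homogeneous: "c \<ge> 0 \<Longrightarrow> T (\<lambda>y. c * f y) = (\<lambda>x. c * T f x)"
  using lto unfolding lower_transition_operator_def by blast

lemma lto_add_const: "T (\<lambda>y. f y + c) x = T f x + c"
proof -
  have const: "T (\<lambda>y. d) x \<ge> d" for d
    using lto_ge_Min[of "\<lambda>y. d" x] by simp
  have "T (\<lambda>y. (f y + c) + - c) x \<ge> T (\<lambda>y. f y + c) x + T (\<lambda>y. - c) x"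
    by (rule lto_superadditive)
  then show ?thesis
    using lto_superadditive[of f x "\<lambda>y. c"] const[of c] const[of "- c"] by simp
qed

lemma lto_mono:
  assumes "\<And>y. f y \<le> g y"
  shows "T f x \<le> T g x"
proof -
  have "Min (range (\<lambda>y. g y - f y)) \<ge> 0"
    using assms by (subst Min_ge_iff) auto
  then have "T (\<lambda>y. g y - f y) x \<ge> 0"
    using lto_ge_Min[of "\<lambda>y. g y - f y" x] by linarith
  then show ?thesis
    using lto_superadditive[of f x "\<lambda>y. g y - f y"] by simp
qed

lemma lto_diff_le_fnorm: "T f x - T g x \<le> fnorm (\<lambda>y. f y - g y)"
proof -
  have "f y \<le> g y + fnorm (\<lambda>y. f y - g y)" for y
    using abs_le_fnorm[of "\<lambda>y. f y - g y" y] by (auto simp: abs_le_iff)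
  then have "T f x \<le> T (\<lambda>y. g y + fnorm (\<lambda>y. f y - g y)) x"
    by (rule lto_mono)
  then show ?thesis
    using lto_add_const by simp
qed

lemma lto_nonexpansive: "fnorm (\<lambda>x. T f x - T g x) \<le> fnorm (\<lambda>x. f x - g x)"
  unfolding fnorm_le_iff abs_le_iff
  using lto_diff_le_fnorm[of f _ g] lto_diff_le_fnorm[of g _ f] fnorm_minus_commute[of f g]
  by auto

end

context
  fixes S T :: "('x::finite \<Rightarrow> real) \<Rightarrow> ('x \<Rightarrow> real)"
  assumes S: "lower_transition_operator S" and T: "lower_transition_operator T"
begin

lemma lto_diff_homogeneous:
  "c \<ge> 0 \<Longrightarrow> (\<lambda>x. S (\<lambda>y. c * f y) x - T (\<lambda>y. c * f y) x) = (\<lambda>x. c * (S f x - T f x))"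
  by (simp add: lto_homogeneous[OF S] lto_homogeneous[OF T] right_diff_distrib)

lemma lto_diff_lipschitz:
  "fnorm (\<lambda>x. (S f x - T f x) - (S g x - T g x)) \<le> 2 * fnorm (\<lambda>x. f x - g x)"
  unfolding fnorm_le_iff
proof
  fix x
  have "\<bar>S f x - S g x\<bar> \<le> fnorm (\<lambda>x. f x - g x)"
    using order_trans[OF abs_le_fnorm[of "\<lambda>x. S f x - S g x"] lto_nonexpansive[OF S]] .
  moreover have "\<bar>T f x - T g x\<bar> \<le> fnorm (\<lambda>x. f x - g x)"
    using order_trans[OF abs_le_fnorm[of "\<lambda>x. T f x - T g x"] lto_nonexpansive[OF T]] .
  ultimately show "\<bar>(S f x - T f x) - (S g x - T g x)\<bar> \<le> 2 * fnorm (\<lambda>x. f x - g x)"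
    by linarith
qed

lemmas lto_diff_fnorm_le_opnorm =
  fnorm_le_opnorm[of "\<lambda>f x. S f x - T f x", OF lto_diff_homogeneous lto_diff_lipschitz]

lemmas lto_diff_opnorm_nonneg =
  opnorm_nonneg[of "\<lambda>f x. S f x - T f x", OF lto_diff_homogeneous lto_diff_lipschitz]

end

theorem proposition1:
  fixes T :: "('x::finite \<Rightarrow> real) \<Rightarrow> ('x \<Rightarrow> real)"
    and Tn :: "nat \<Rightarrow> ('x \<Rightarrow> real) \<Rightarrow> ('x \<Rightarrow> real)"
  assumes "lower_transition_operator T"
    and "\<And>n. lower_transition_operator (Tn n)"
  shows "(\<lambda>n. opnorm (\<lambda>f x. Tn n f x - T f x)) \<longlonglongrightarrow> 0 \<longleftrightarrow>
         (\<forall>f. (\<lambda>n. fnorm (\<lambda>x. Tn n f x - T f x)) \<longlonglongrightarrow> 0)"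
proof
  assume lim: "(\<lambda>n. opnorm (\<lambda>f x. Tn n f x - T f x)) \<longlonglongrightarrow> 0"
  show "\<forall>f. (\<lambda>n. fnorm (\<lambda>x. Tn n f x - T f x)) \<longlonglongrightarrow> 0"
  proof
    fix f :: "'x \<Rightarrow> real"
    have "(\<lambda>n. opnorm (\<lambda>f x. Tn n f x - T f x) * fnorm f) \<longlonglongrightarrow> 0"
      using tendsto_mult_left_zero[OF lim] .
    then show "(\<lambda>n. fnorm (\<lambda>x. Tn n f x - T f x)) \<longlonglongrightarrow> 0"
      by (rule tendsto_sandwich[rotated 2, OF tendsto_const])
        (simp_all add: fnorm_nonneg lto_diff_fnorm_le_opnorm[OF assms(2) assms(1)])
  qed
next
  assume pointwise: "\<forall>f. (\<lambda>n. fnorm (\<lambda>x. Tn n f x - T f x)) \<longlonglongrightarrow> 0"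
  show "(\<lambda>n. opnorm (\<lambda>f x. Tn n f x - T f x)) \<longlonglongrightarrow> 0"
  proof (rule order_tendstoI)
    fix a :: real
    assume "a < 0"
    then show "eventually (\<lambda>n. a < opnorm (\<lambda>f x. Tn n f x - T f x)) sequentially"
      using lto_diff_opnorm_nonneg[OF assms(2) assms(1)] by (simp add: less_le_trans)
  next
    fix a :: real
    assume "a > 0"
    then have "eventually (\<lambda>n. \<forall>f. fnorm f = 1 \<longrightarrow> fnorm (\<lambda>x. Tn n f x - T f x) \<le> a / 2)
        sequentially"
      using pointwise lto_diff_lipschitz[OF assms(2) assms(1)]
      by (intro equi_lipschitz_uniform_convergence[where L = 2]) auto
    then have "eventually (\<lambda>n. opnorm (\<lambda>f x. Tn n f x - T f x) \<le> a / 2) sequentially"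
      by eventually_elim (rule opnorm_le, blast)
    then show "eventually (\<lambda>n. opnorm (\<lambda>f x. Tn n f x - T f x) < a) sequentially"
      by eventually_elim (use \<open>a > 0\<close> in linarith)
  qed
qed

end
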